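(* Let $H_A,H_B$ be finite-dimensional Hilbert spaces and let $\Phi:B(H_A)\to B(H_B)$ be a positive, trace-preserving linear map whose adjoint $\Phi^*:B(H_B)\to B(H_A)$ (with respect to the Hilbert–Schmidt inner product) satisfies the Schwarz-type inequality $$\Phi^{*}(\rho^{*})\,\Phi^{*}(\sigma)^{-1}\,\Phi^{*}(\rho)\le \Phi^{*}(\rho^{*}\sigma^{-1}\rho)$$ for every $\rho\in B(H_B)$ and every positive definite $\sigma\in B(H_B)$ (with $\Phi^*(\sigma)$ invertible). Let $X\in B(H_A)$ be positive definite with $\Phi(X)$ invertible, and let $\omega\in B(H_B)$ be positive definite. Define $$\tau=X^{1/2}\,\Phi^{*}\!\big(\Phi(X)^{-1/2}\,\omega\, \Phi(X)^{-1/2}\big)\,X^{1/2}\in B(H_A),$$ and assume $\tau$ is invertible. Define the linear map $V:B(H_B)\to B(H_A)$ by $V(\rho)=\Phi^{*}\big(\rho\,\Phi(X)^{-1/2}\big)X^{1/2}$. Then for every positive semidefinite $Y\in B(H_A)$, $$V^{*}\,\Delta(Y,\tau)\,V\le \Delta(\Phi(Y),\omega)$$ as operators on the Hilbert space $B(H_B)$ equipped with the inner product $\langle A,B\rangle=\operatorname{tr}(A^*B)$.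
   Context: For a positive semidefinite operator $\rho$ and a positive definite operator $\sigma$ on a finite-dimensional Hilbert space $H$, the relative modular operator $\Delta(\rho,\sigma)$ is the linear map on $B(H)$ given by $\Delta(\rho,\sigma)(Z)=\rho Z\sigma^{-1}$ (left multiplication by $\rho$ composed with right multiplication by $\sigma^{-1}$); it is a positive operator on $B(H)$ with the Hilbert–Schmidt inner product $\langle A,B\rangle=\operatorname{tr}(A^*B)$. $V^*$ denotes the adjoint of $V$ with respect to the Hilbert–Schmidt inner products. *)

theory Defs
  imports "HOL-Analysis.Analysis" "HOL-Library.Complex_Order"
begin

text \<open>Operators on the finite-dimensional Hilbert space complex^'n are represented by
  matrices complex^'n^'n (B(H)); the order on complex numbers is the standard partial order
  (0 \<le> z iff z is real and nonnegative), from HOL-Library.Complex_Order.\<close>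

type_synonym 'n cmat = "complex^'n^'n"

definition cinner :: "complex^('n::finite) \<Rightarrow> complex^'n \<Rightarrow> complex" where
  "cinner x y = (\<Sum>i\<in>UNIV. cnj (x$i) * y$i)"

definition madj :: "('n::finite) cmat \<Rightarrow> ('n::finite) cmat" where
  "madj A = (\<chi> i j. cnj (A$j$i))"

definition cmscale :: "complex \<Rightarrow> ('n::finite) cmat \<Rightarrow> ('n::finite) cmat" where
  "cmscale c A = (\<chi> i j. c * A$i$j)"

definition psd :: "('n::finite) cmat \<Rightarrow> bool" where
  "psd A \<longleftrightarrow> (\<forall>x. 0 \<le> cinner x (A *v x))"

definition pd :: "('n::finite) cmat \<Rightarrow> bool" where
  "pd A \<longleftrightarrow> (\<forall>x. x \<noteq> 0 \<longrightarrow> 0 < cinner x (A *v x))"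

definition loewner_le :: "('n::finite) cmat \<Rightarrow> ('n::finite) cmat \<Rightarrow> bool" where
  "loewner_le A B \<longleftrightarrow> psd (B - A)"

definition msqrt :: "('n::finite) cmat \<Rightarrow> ('n::finite) cmat" where
  "msqrt A = (THE B. psd B \<and> B ** B = A)"

definition minvsqrt :: "('n::finite) cmat \<Rightarrow> ('n::finite) cmat" where
  "minvsqrt A = matrix_inv (msqrt A)"

definition hs :: "('n::finite) cmat \<Rightarrow> ('n::finite) cmat \<Rightarrow> complex" where
  "hs A B = trace (madj A ** B)"

definition clinear_map :: "(('a::finite) cmat \<Rightarrow> ('b::finite) cmat) \<Rightarrow> bool" where
  "clinear_map T \<longleftrightarrow> (\<forall>A B. T (A + B) = T A + T B) \<and> (\<forall>c A. T (cmscale c A) = cmscale c (T A))"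

definition positive_map :: "(('a::finite) cmat \<Rightarrow> ('b::finite) cmat) \<Rightarrow> bool" where
  "positive_map T \<longleftrightarrow> (\<forall>A. psd A \<longrightarrow> psd (T A))"

definition trace_preserving :: "(('a::finite) cmat \<Rightarrow> ('b::finite) cmat) \<Rightarrow> bool" where
  "trace_preserving T \<longleftrightarrow> (\<forall>A. trace (T A) = trace A)"

definition hs_adjoint :: "(('a::finite) cmat \<Rightarrow> ('b::finite) cmat) \<Rightarrow> (('b::finite) cmat \<Rightarrow> ('a::finite) cmat)" where
  "hs_adjoint T = (THE S. \<forall>A B. hs (S B) A = hs B (T A))"

definition rel_modular :: "('n::finite) cmat \<Rightarrow> ('n::finite) cmat \<Rightarrow> ('n::finite) cmat \<Rightarrow> ('n::finite) cmat" where
  "rel_modular \<rho> \<sigma> Z = \<rho> ** Z ** matrix_inv \<sigma>"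

definition op_le :: "(('n::finite) cmat \<Rightarrow> ('n::finite) cmat) \<Rightarrow> (('n::finite) cmat \<Rightarrow> ('n::finite) cmat) \<Rightarrow> bool" where
  "op_le L M \<longleftrightarrow> (\<forall>Z. 0 \<le> hs Z (M Z - L Z))"

end

theory Submission
  imports Defs
begin

(* Pair both sides with an arbitrary Z in B(H_B); write Phi^* for the adjoint map,
   P = Phi(X)^(-1/2) and sigma = P omega P, so that tau = X^(1/2) Phi^*[sigma] X^(1/2).
   The square roots of X cancel against tau^(-1), and the left side becomes
   tr(Y Phi^*[Z P] Phi^*[sigma]^(-1) Phi^*[P Z^*]), while by duality the right side is
   tr(Y Phi^*[Z omega^(-1) Z^*]) = tr(Y Phi^*[rho^* sigma^(-1) rho]) with rho = P Z^*.
   The Schwarz inequality for this rho therefore exhibits the difference as tr(Y D)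
   with Y and D positive semidefinite, which is nonnegative.
   Positivity of Phi is needed so that Phi^* commutes with taking adjoints; the positive
   square roots come from a spectral theorem for Hermitian matrices, proved by maximising
   the quadratic form over orthogonal complements of eigenvectors. *)

lemma madj_madj [simp]: "madj (madj A) = A"
  by (simp add: madj_def vec_eq_iff)

lemma madj_mult: "madj (A ** B) = madj B ** madj A"
  by (simp add: madj_def matrix_matrix_mult_def vec_eq_iff mult.commute)

lemma madj_add: "madj (A + B) = madj A + madj B"
  by (simp add: madj_def vec_eq_iff)

lemma madj_diff: "madj (A - B) = madj A - madj B"
  by (simp add: madj_def vec_eq_iff)

lemma madj_mat1 [simp]: "madj (mat 1) = mat 1"
  by (simp add: madj_def vec_eq_iff mat_def)

lemma madj_cmscale: "madj (cmscale c A) = cmscale (cnj c) (madj A)"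
  by (simp add: madj_def cmscale_def vec_eq_iff)

lemma cmscale_matrix_vector_mult: "cmscale c A *v x = c *s (A *v x)"
  by (auto simp: cmscale_def matrix_vector_mult_def vec_eq_iff sum_distrib_left mult_ac
      intro!: sum.cong)

lemma cmscale_matrix_mult: "cmscale c A ** B = cmscale c (A ** B)"
  by (simp add: matrix_matrix_mult_def cmscale_def vec_eq_iff sum_distrib_left mult_ac)

lemma matrix_mult_add_right: "((A::complex^'n^'m) + B) ** C = A ** C + B ** C"
  by (simp add: matrix_matrix_mult_def vec_eq_iff sum.distrib distrib_right)

lemma matrix_mult_diff_left: "(A::complex^'n^'m) ** (B - C) = A ** B - A ** C"
  by (simp add: matrix_matrix_mult_def vec_eq_iff sum_subtractf right_diff_distrib)

lemma vector_scaleR_component_complex: "((r::real) *\<^sub>R (y::complex^'n)) $ i = of_real r * y $ i"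
  by (subst vector_scaleR_component) (simp add: scaleR_conv_of_real)

lemma matrix_vector_mult_scale: "(A::complex^'n^'m) *v (c *s x) = c *s (A *v x)"
  by (auto simp: matrix_vector_mult_def vec_eq_iff sum_distrib_left mult_ac intro!: sum.cong)

lemma matrix_vector_mult_scaleR: "(A::complex^'n^'m) *v (r *\<^sub>R x) = r *\<^sub>R (A *v x)"
  by (simp add: vec_eq_iff matrix_vector_mult_def vector_scaleR_component_complex
      sum_distrib_left mult_ac del: vector_scaleR_component)

lemma matrix_vector_mult_sum: "(A::complex^'n^'m) *v (sum f S) = (\<Sum>s\<in>S. A *v f s)"
  by (induction S rule: infinite_finite_induct) (auto simp: matrix_vector_right_distrib)

lemma cinner_madj: "cinner x (A *v y) = cinner (madj A *v x) y"
  unfolding cinner_def matrix_vector_mult_def madj_def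
  by (simp add: sum_distrib_left sum_distrib_right, subst sum.swap) (simp add: mult_ac)

lemma cnj_cinner: "cnj (cinner x y) = cinner y x"
  by (simp add: cinner_def mult.commute)

lemma cinner_add_right: "cinner x (y + z) = cinner x y + cinner x z"
  by (simp add: cinner_def distrib_left sum.distrib)

lemma cinner_add_left: "cinner (x + y) z = cinner x z + cinner y z"
  by (simp add: cinner_def distrib_right sum.distrib)

lemma cinner_diff_right: "cinner x (y - z) = cinner x y - cinner x z"
  by (simp add: cinner_def right_diff_distrib sum_subtractf)

lemma cinner_minus_right: "cinner x (- y) = - cinner x y"
  by (simp add: cinner_def sum_negf)

lemma cinner_scale_right: "cinner x (c *s y) = c * cinner x y"
  by (simp add: cinner_def sum_distrib_left mult_ac)

lemma cinner_scale_left: "cinner (c *s x) y = cnj c * cinner x y"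
  by (simp add: cinner_def sum_distrib_left mult_ac)

lemma cinner_scaleR_right: "cinner x (r *\<^sub>R y) = of_real r * cinner x y"
  unfolding cinner_def sum_distrib_left
  by (rule sum.cong) (auto simp: vector_scaleR_component_complex simp del: vector_scaleR_component)

lemma cinner_scaleR_left: "cinner (r *\<^sub>R x) y = of_real r * cinner x y"
  unfolding cinner_def sum_distrib_left
  by (rule sum.cong) (auto simp: vector_scaleR_component_complex simp del: vector_scaleR_component)

lemma cinner_zero_left [simp]: "cinner 0 y = 0"
  by (simp add: cinner_def)

lemma cinner_zero_right [simp]: "cinner y 0 = 0"
  by (simp add: cinner_def)

lemma cinner_sum_right: "cinner x (sum f S) = (\<Sum>s\<in>S. cinner x (f s))"
  by (induction S rule: infinite_finite_induct) (auto simp: cinner_add_right)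

lemma cinner_axis: "cinner (axis i 1) v = v $ i"
proof -
  have "cinner (axis i 1) v = (\<Sum>j\<in>UNIV. if j = i then v $ j else 0)"
    unfolding cinner_def axis_def by (rule sum.cong) auto
  then show ?thesis by simp
qed

lemma cnj_mult_self: "cnj a * a = of_real ((norm a)\<^sup>2)"
  by (metis complex_norm_square mult.commute)

lemma cinner_self: "cinner x x = of_real ((norm x)\<^sup>2)"
proof -
  have "cinner x x = (\<Sum>i\<in>UNIV. of_real ((norm (x $ i))\<^sup>2))"
    unfolding cinner_def by (rule sum.cong) (auto simp: cnj_mult_self)
  also have "\<dots> = of_real ((norm x)\<^sup>2)"
    unfolding norm_vec_def L2_set_def by (simp add: sum_nonneg)
  finally show ?thesis .
qed

lemma cinner_self_eq_0 [simp]: "cinner x x = 0 \<longleftrightarrow> x = 0"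
  by (simp add: cinner_self)

lemma inner_eq_Re_cinner: "inner x y = Re (cinner x y)"
  by (simp add: inner_vec_def cinner_def inner_complex_def Re_sum)

lemma norm_cinner_le: "norm (cinner x y) \<le> norm x * norm y"
proof -
  have "norm (cinner x y) \<le> (\<Sum>i\<in>UNIV. norm (cnj (x $ i) * y $ i))"
    unfolding cinner_def by (rule norm_sum)
  also have "\<dots> = (\<Sum>i\<in>UNIV. \<bar>norm (x $ i)\<bar> * \<bar>norm (y $ i)\<bar>)"
    by (simp add: norm_mult)
  also have "\<dots> \<le> norm x * norm y"
    unfolding norm_vec_def by (rule L2_set_mult_ineq)
  finally show ?thesis .
qed

lemma continuous_on_Re_quadratic_form:
  "continuous_on S (\<lambda>x. Re (cinner x ((A::'n::finite cmat) *v x)))"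
proof -
  have "isCont (\<lambda>x. (A *v x) $ i) a" for a i
    by (intro isCont_vec_nth linear_continuous_at) simp
  then show ?thesis
    unfolding cinner_def
    by (intro continuous_at_imp_continuous_on ballI continuous_intros isCont_vec_nth) auto
qed

lemma matrix_eq_cinnerI:
  assumes "\<And>x y. cinner x (A *v y) = cinner x (B *v y)"
  shows "A = B"
proof -
  have "A *v y = B *v y" for y
    using assms[of "axis _ 1" y] by (simp add: cinner_axis vec_eq_iff)
  then show ?thesis by (simp add: matrix_eq)
qed

lemma matrix_inv_right:
  fixes A :: "complex^'n^'n"
  assumes "invertible A" shows "A ** matrix_inv A = mat 1"
  unfolding matrix_inv_def
  using someI_ex[of "\<lambda>A'. A ** A' = mat 1 \<and> A' ** A = mat 1"] assms invertible_def by blast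

lemma matrix_inv_left:
  fixes A :: "complex^'n^'n"
  assumes "invertible A" shows "matrix_inv A ** A = mat 1"
  unfolding matrix_inv_def
  using someI_ex[of "\<lambda>A'. A ** A' = mat 1 \<and> A' ** A = mat 1"] assms invertible_def by blast

lemma matrix_inv_unique:
  fixes A B :: "complex^'n^'n"
  assumes "A ** B = mat 1" shows "matrix_inv A = B"
proof -
  have BA: "B ** A = mat 1" using assms matrix_left_right_inverse by blast
  then have "invertible A" using assms invertible_def by blast
  then have "B ** (A ** matrix_inv A) = B" by (simp add: matrix_inv_right)
  then show ?thesis by (simp add: matrix_mul_assoc BA)
qed

lemma invertible_matrix_inv:
  fixes A :: "complex^'n^'n"
  assumes "invertible A" shows "invertible (matrix_inv A)"
  using assms matrix_inv_left matrix_inv_right invertible_def by blast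

lemma invertible_mult_factors:
  fixes A B :: "complex^'n^'n"
  assumes "invertible (A ** B)"
  shows "invertible A" "invertible B"
  using assms by (auto simp: invertible_det_nz det_mul)

lemma matrix_inv_mult:
  fixes A B :: "complex^'n^'n"
  assumes "invertible A" "invertible B"
  shows "matrix_inv (A ** B) = matrix_inv B ** matrix_inv A"
proof (rule matrix_inv_unique)
  have "A ** B ** (matrix_inv B ** matrix_inv A) = A ** (B ** matrix_inv B) ** matrix_inv A"
    by (simp add: matrix_mul_assoc)
  then show "A ** B ** (matrix_inv B ** matrix_inv A) = mat 1"
    using assms by (simp add: matrix_inv_right)
qed

lemma matrix_inv_sandwich:
  fixes S G :: "complex^'n^'n"
  assumes "invertible S" "invertible G"
  shows "S ** matrix_inv (S ** G ** S) ** S = matrix_inv G"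
proof -
  have "S ** matrix_inv (S ** G ** S) ** S
      = (S ** matrix_inv S) ** matrix_inv G ** (matrix_inv S ** S)"
    using assms by (simp add: matrix_inv_mult invertible_mult matrix_mul_assoc)
  also have "\<dots> = matrix_inv G"
    using assms by (simp add: matrix_inv_right matrix_inv_left)
  finally show ?thesis .
qed

lemma madj_matrix_inv:
  fixes A :: "complex^'n^'n"
  assumes "invertible A" shows "madj (matrix_inv A) = matrix_inv (madj A)"
proof -
  have "madj A ** madj (matrix_inv A) = mat 1"
    using assms by (simp flip: madj_mult add: matrix_inv_left)
  then show ?thesis by (simp add: matrix_inv_unique)
qed

lemma inj_imp_invertible: "inj ((*v) (A::complex^'n^'n)) \<Longrightarrow> invertible A"
  using det_nz_iff_inj_gen[of "(*v) A"] matrix_vector_mul_linear_gen[of A] invertible_det_nz[of A]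
  by (simp add: matrix_of_matrix_vector_mul[unfolded eta_contract_eq])

section \<open>The Hilbert--Schmidt inner product and adjoint maps\<close>

definition matrix_unit :: "'n::finite \<Rightarrow> 'n \<Rightarrow> 'n cmat" where
  "matrix_unit k l = (\<chi> a b. if a = k \<and> b = l then 1 else 0)"

lemma hs_eq_sum: "hs C A = (\<Sum>k\<in>UNIV. \<Sum>l\<in>UNIV. cnj (C $ k $ l) * A $ k $ l)"
  unfolding hs_def trace_def madj_def matrix_matrix_mult_def
  by (simp, subst sum.swap, simp)

lemma sum_sum_delta:
  fixes k :: "'a::finite" and l :: "'b::finite" and f :: "'a \<Rightarrow> 'b \<Rightarrow> 'c::comm_monoid_add"
  shows "(\<Sum>a\<in>UNIV. \<Sum>b\<in>UNIV. if a = k \<and> b = l then f a b else 0) = f k l"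
proof -
  have "(\<Sum>a\<in>UNIV. \<Sum>b\<in>UNIV. if a = k \<and> b = l then f a b else 0)
      = (\<Sum>a\<in>(UNIV::'a set). if a = k then (\<Sum>b\<in>(UNIV::'b set). if b = l then f a b else 0) else 0)"
    by (rule sum.cong) auto
  then show ?thesis by simp
qed

lemma hs_matrix_unit: "hs C (matrix_unit k l) = cnj (C $ k $ l)"
  unfolding hs_eq_sum matrix_unit_def by (simp add: if_distrib sum_sum_delta cong: if_cong)

lemma matrix_eq_sum_matrix_unit:
  "A = (\<Sum>k\<in>UNIV. \<Sum>l\<in>UNIV. cmscale (A $ k $ l) (matrix_unit k l))"
proof -
  have "(\<Sum>k\<in>UNIV. \<Sum>l\<in>UNIV. if i = k \<and> j = l then A $ k $ l else 0) = A $ i $ j" for i j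
    using sum_sum_delta[of i j "\<lambda>k l. A $ k $ l"] by (simp add: eq_commute)
  then show ?thesis
    by (simp add: vec_eq_iff cmscale_def matrix_unit_def if_distrib cong: if_cong)
qed

lemma hs_cnj: "hs A B = cnj (hs B A)"
  unfolding hs_eq_sum by (simp add: mult.commute)

lemma hs_madj_commute: "hs (madj C) D = hs (madj D) C"
  unfolding hs_def madj_madj by (rule trace_mul_sym)

lemma hs_add_left: "hs (A + B) C = hs A C + hs B C"
  unfolding hs_eq_sum by (simp add: distrib_right sum.distrib)

lemma hs_add_right: "hs A (B + C) = hs A B + hs A C"
  unfolding hs_eq_sum by (simp add: distrib_left sum.distrib)

lemma hs_diff_right: "hs A (B - C) = hs A B - hs A C"
  unfolding hs_eq_sum by (simp add: right_diff_distrib sum_subtractf)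

lemma hs_scale_left: "hs (cmscale c B) A = cnj c * hs B A"
  unfolding hs_eq_sum by (simp add: cmscale_def sum_distrib_left mult_ac)

lemma hs_scale_right: "hs A (cmscale c B) = c * hs A B"
  unfolding hs_eq_sum by (simp add: cmscale_def sum_distrib_left mult_ac)

lemma hs_zero_right [simp]: "hs A 0 = 0"
  unfolding hs_eq_sum by simp

lemma hs_sum_right: "hs A (sum f S) = (\<Sum>s\<in>S. hs A (f s))"
  by (induction S rule: infinite_finite_induct) (auto simp: hs_add_right)

lemma hs_left_eqI:
  assumes "\<And>A. hs C A = hs C' A" shows "C = C'"
  using assms[of "matrix_unit _ _"] by (simp add: hs_matrix_unit vec_eq_iff)

lemma clinear_map_zero: "clinear_map T \<Longrightarrow> T 0 = 0"
  unfolding clinear_map_def by (metis add_cancel_right_right add_0)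

lemma clinear_map_add: "clinear_map T \<Longrightarrow> T (A + B) = T A + T B"
  unfolding clinear_map_def by blast

lemma clinear_map_scale: "clinear_map T \<Longrightarrow> T (cmscale c A) = cmscale c (T A)"
  unfolding clinear_map_def by blast

lemma clinear_map_sum: "clinear_map T \<Longrightarrow> T (sum f S) = (\<Sum>s\<in>S. T (f s))"
  by (induction S rule: infinite_finite_induct) (auto simp: clinear_map_add clinear_map_zero)

lemma hs_adjoint_ex1:
  assumes "clinear_map T"
  shows "\<exists>!S. \<forall>A B. hs (S B) A = hs B (T A)"
proof (rule ex1I)
  define S where "S B = (\<chi> k l. cnj (hs B (T (matrix_unit k l))))" for B
  show "\<forall>A B. hs (S B) A = hs B (T A)"
  proof (intro allI)
    fix A B
    have "hs B (T A) = (\<Sum>k\<in>UNIV. \<Sum>l\<in>UNIV. A $ k $ l * hs B (T (matrix_unit k l)))"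
      by (subst matrix_eq_sum_matrix_unit)
        (simp add: clinear_map_sum[OF assms] clinear_map_scale[OF assms] hs_sum_right hs_scale_right)
    then show "hs (S B) A = hs B (T A)"
      unfolding hs_eq_sum S_def by (simp add: mult.commute)
  qed
next
  fix S' assume "\<forall>A B. hs (S' B) A = hs B (T A)"
  then have "S' B $ k $ l = cnj (hs B (T (matrix_unit k l)))" for B k l
    by (metis complex_cnj_cnj hs_matrix_unit)
  then show "S' = (\<lambda>B. \<chi> k l. cnj (hs B (T (matrix_unit k l))))"
    by (simp add: vec_eq_iff fun_eq_iff)
qed

lemma hs_hs_adjoint: "clinear_map T \<Longrightarrow> hs (hs_adjoint T B) A = hs B (T A)"
  unfolding hs_adjoint_def using theI'[OF hs_adjoint_ex1] by blast

lemma clinear_map_hs_adjoint: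
  assumes "clinear_map T" shows "clinear_map (hs_adjoint T)"
  unfolding clinear_map_def
  by (auto intro!: hs_left_eqI simp: hs_hs_adjoint[OF assms] hs_add_left hs_scale_left)

lemma hs_hs_adjoint_comp:
  assumes "clinear_map V"
  shows "hs Z (hs_adjoint V (L (V Z))) = hs (V Z) (L (V Z))"
  by (metis assms hs_cnj hs_hs_adjoint)

lemma hs_rel_modular_self: "hs Z (rel_modular A B Z) = trace (A ** (Z ** matrix_inv B ** madj Z))"
proof -
  have "hs Z (rel_modular A B Z) = trace (madj Z ** (A ** Z ** matrix_inv B))"
    unfolding hs_def rel_modular_def ..
  also have "\<dots> = trace (A ** (Z ** matrix_inv B ** madj Z))"
    by (subst trace_mul_sym) (simp add: matrix_mul_assoc)
  finally show ?thesis .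
qed

section \<open>Hermitian and positive semidefinite matrices\<close>

lemma complex_nonneg_iff: "0 \<le> (z::complex) \<longleftrightarrow> Im z = 0 \<and> 0 \<le> Re z"
  by (auto simp: less_eq_complex_def)

lemma Im_cinner_hermitian:
  assumes "madj A = A" shows "Im (cinner x (A *v x)) = 0"
proof -
  have "cnj (cinner x (A *v x)) = cinner (A *v x) x" by (rule cnj_cinner)
  also have "\<dots> = cinner x (A *v x)"
    using cinner_madj[of x "madj A" x] assms by simp
  finally show ?thesis by (simp add: complex_eq_iff)
qed

text \<open>By polarization, using that the quadratic form is real.\<close>

lemma psd_madj:
  assumes "psd A" shows "madj A = A"
proof -
  have real: "Im (cinner x (A *v x)) = 0" for x
    using assms unfolding psd_def by (simp add: complex_nonneg_iff)
  have sym: "cinner x (A *v y) = cnj (cinner y (A *v x))" for x y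
  proof -
    let ?a = "cinner x (A *v y)" and ?b = "cinner y (A *v x)"
    have "cinner (x + y) (A *v (x + y)) = cinner x (A *v x) + (?a + ?b) + cinner y (A *v y)"
      by (simp only: matrix_vector_right_distrib cinner_add_left cinner_add_right)
        (simp add: algebra_simps)
    then have "Im (?a + ?b) = 0" using real[of "x + y"] real[of x] real[of y] by simp
    moreover have "cinner (x + \<i> *s y) (A *v (x + \<i> *s y))
        = cinner x (A *v x) + (\<i> * ?a - \<i> * ?b) + cinner y (A *v y)"
      by (simp only: matrix_vector_right_distrib matrix_vector_mult_scale cinner_add_left
          cinner_add_right cinner_scale_left cinner_scale_right) (simp add: algebra_simps)
    then have "Re ?a = Re ?b" using real[of "x + \<i> *s y"] real[of x] real[of y] by simp
    ultimately show ?thesis by (simp add: complex_eq_iff)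
  qed
  show ?thesis
  proof (rule matrix_eq_cinnerI)
    fix x y
    show "cinner x (madj A *v y) = cinner x (A *v y)"
      using cinner_madj[of x "madj A" y] sym[of x y] by (simp add: cnj_cinner)
  qed
qed

lemma pd_imp_psd: "pd A \<Longrightarrow> psd A"
  unfolding pd_def psd_def by (metis cinner_zero_left order_less_imp_le order_refl)

lemma pd_imp_invertible:
  assumes "pd A" shows "invertible A"
proof (rule inj_imp_invertible, rule injI)
  fix x y assume "A *v x = A *v y"
  then have "cinner (x - y) (A *v (x - y)) = 0" by (simp add: matrix_vector_mult_diff_distrib)
  then show "x = y" using assms unfolding pd_def by (metis less_irrefl eq_iff_diff_eq_0)
qed

lemma pd_sandwich:
  fixes P \<omega> :: "'n::finite cmat"
  assumes "pd \<omega>" "madj P = P" "invertible P"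
  shows "pd (P ** \<omega> ** P)"
  unfolding pd_def
proof (intro allI impI)
  fix x :: "complex^'n" assume "x \<noteq> 0"
  then have "P *v x \<noteq> 0"
    using inj_matrix_vector_mult[OF assms(3)] by (metis injD matrix_vector_mult_0_right)
  then have "0 < cinner (P *v x) (\<omega> *v (P *v x))" using assms(1) unfolding pd_def by blast
  also have "\<dots> = cinner x ((P ** \<omega> ** P) *v x)"
    using cinner_madj[of x P "\<omega> *v (P *v x)"] assms(2)
    by (simp add: matrix_vector_mul_assoc matrix_mul_assoc)
  finally show "0 < cinner x ((P ** \<omega> ** P) *v x)" .
qed

lemma psd_scaled_mat1: "0 \<le> c \<Longrightarrow> psd (cmscale (of_real c) (mat 1) :: 'n::finite cmat)"
  unfolding psd_def
  by (simp add: cmscale_matrix_vector_mult cinner_scale_right cinner_self complex_nonneg_iff)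

lemma hermitian_plus_scalar_psd:
  assumes "madj H = H"
  obtains c :: real where "0 \<le> c" "psd (H + cmscale (of_real c) (mat 1))"
proof -
  obtain K where K: "\<And>x. norm (H *v x) \<le> norm x * K"
    using bounded_linear.bounded[OF matrix_vector_mul_bounded_linear[of H]] by blast
  have "psd (H + cmscale (of_real \<bar>K\<bar>) (mat 1))"
    unfolding psd_def
  proof
    fix x
    have "- Re (cinner x (H *v x)) \<le> norm x * (norm x * K)"
      using norm_cinner_le[of x "H *v x"] K[of x] abs_Re_le_cmod[of "cinner x (H *v x)"]
      by (smt (verit) mult_left_mono norm_ge_zero)
    also have "\<dots> \<le> \<bar>K\<bar> * (norm x)\<^sup>2"
      using mult_left_mono[OF abs_ge_self[of K], of "(norm x)\<^sup>2"]
      by (simp add: power2_eq_square mult_ac)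
    finally show "0 \<le> cinner x ((H + cmscale (of_real \<bar>K\<bar>) (mat 1)) *v x)"
      using Im_cinner_hermitian[OF assms, of x]
      by (simp add: matrix_vector_mult_add_rdistrib cinner_add_right cmscale_matrix_vector_mult
          cinner_scale_right cinner_self complex_nonneg_iff)
  qed
  then show thesis using that[of "\<bar>K\<bar>"] by simp
qed

lemma positive_map_hermitian:
  assumes lin: "clinear_map \<Phi>" and pos: "positive_map \<Phi>" and "madj H = H"
  shows "madj (\<Phi> H) = \<Phi> H"
proof -
  obtain c where c: "0 \<le> c" "psd (H + cmscale (of_real c) (mat 1))"
    using hermitian_plus_scalar_psd[OF \<open>madj H = H\<close>] by blast
  have "\<Phi> H = \<Phi> (H + cmscale (of_real c) (mat 1)) - \<Phi> (cmscale (of_real c) (mat 1))"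
    by (simp add: clinear_map_add[OF lin])
  moreover have "madj (\<Phi> (H + cmscale (of_real c) (mat 1))) = \<Phi> (H + cmscale (of_real c) (mat 1))"
    and "madj (\<Phi> (cmscale (of_real c) (mat 1))) = \<Phi> (cmscale (of_real c) (mat 1))"
    using pos c psd_scaled_mat1[OF c(1)] unfolding positive_map_def by (blast intro: psd_madj)+
  ultimately show ?thesis by (metis madj_diff)
qed

text \<open>Write A = H1 + i H2 with H1, H2 Hermitian.\<close>

lemma positive_map_madj:
  assumes lin: "clinear_map \<Phi>" and pos: "positive_map \<Phi>"
  shows "\<Phi> (madj A) = madj (\<Phi> A)"
proof -
  define H1 where "H1 = cmscale (1/2) (A + madj A)"
  define H2 where "H2 = cmscale (-\<i>/2) (A - madj A)"
  have "madj H1 = H1" "madj H2 = H2"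
    unfolding H1_def H2_def by (simp_all add: madj_def cmscale_def vec_eq_iff field_simps)
  then have herm: "madj (\<Phi> H1) = \<Phi> H1" "madj (\<Phi> H2) = \<Phi> H2"
    by (simp_all add: positive_map_hermitian[OF lin pos])
  have A: "A = H1 + cmscale \<i> H2" and madjA: "madj A = H1 + cmscale (-\<i>) H2"
    unfolding H1_def H2_def madj_def cmscale_def vec_eq_iff by (auto simp: field_simps)
  have "\<Phi> (madj A) = \<Phi> H1 + cmscale (-\<i>) (\<Phi> H2)"
    unfolding madjA by (simp add: clinear_map_add[OF lin] clinear_map_scale[OF lin])
  also have "\<dots> = madj (\<Phi> H1 + cmscale \<i> (\<Phi> H2))"
    by (simp add: madj_add madj_cmscale herm)
  also have "\<dots> = madj (\<Phi> A)"
    by (subst A) (simp add: clinear_map_add[OF lin] clinear_map_scale[OF lin])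
  finally show ?thesis .
qed

lemma hs_adjoint_madj:
  assumes lin: "clinear_map \<Phi>" and pos: "positive_map \<Phi>"
  shows "hs_adjoint \<Phi> (madj B) = madj (hs_adjoint \<Phi> B)"
proof (rule hs_left_eqI)
  fix A
  have "hs (madj (hs_adjoint \<Phi> B)) A = cnj (hs (hs_adjoint \<Phi> B) (madj A))"
    by (subst hs_madj_commute) (rule hs_cnj)
  also have "\<dots> = cnj (hs B (madj (\<Phi> A)))"
    by (simp only: hs_hs_adjoint[OF lin] positive_map_madj[OF lin pos])
  also have "\<dots> = hs (madj B) (\<Phi> A)"
    by (subst hs_madj_commute) (rule hs_cnj[symmetric])
  also have "\<dots> = hs (hs_adjoint \<Phi> (madj B)) A"
    by (rule hs_hs_adjoint[OF lin, symmetric])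
  finally show "hs (hs_adjoint \<Phi> (madj B)) A = hs (madj (hs_adjoint \<Phi> B)) A" by simp
qed

lemma trace_mult_hs_adjoint:
  assumes lin: "clinear_map \<Phi>" and pos: "positive_map \<Phi>"
  shows "trace (\<Phi> Y ** M) = trace (Y ** hs_adjoint \<Phi> M)"
proof -
  have "trace (\<Phi> Y ** M) = hs (madj M) (\<Phi> Y)"
    unfolding hs_def madj_madj by (rule trace_mul_sym)
  also have "\<dots> = hs (madj (hs_adjoint \<Phi> M)) Y"
    by (simp only: hs_hs_adjoint[OF lin] hs_adjoint_madj[OF lin pos, symmetric])
  also have "\<dots> = trace (Y ** hs_adjoint \<Phi> M)"
    unfolding hs_def madj_madj by (rule trace_mul_sym)
  finally show ?thesis .
qed

section \<open>The spectral theorem and positive square roots\<close>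

definition orthonormal_set :: "(complex^'n) set \<Rightarrow> bool" where
  "orthonormal_set V \<longleftrightarrow> (\<forall>v\<in>V. \<forall>w\<in>V. cinner v w = (if v = w then 1 else 0))"

definition real_eigenvectors :: "'n::finite cmat \<Rightarrow> (complex^'n) set \<Rightarrow> bool" where
  "real_eigenvectors A V \<longleftrightarrow> (\<forall>v\<in>V. \<exists>l::real. A *v v = l *\<^sub>R v)"

definition orth_compl :: "(complex^'n::finite) set \<Rightarrow> (complex^'n) set" where
  "orth_compl V = {x. \<forall>v\<in>V. cinner v x = 0}"

lemma scaleR_eq_scale_of_real: "(r::real) *\<^sub>R (x::complex^'n) = of_real r *s x"
  by (simp add: vec_eq_iff vector_scaleR_component_complex del: vector_scaleR_component)

lemma vec_subspace_imp_closed: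
  fixes W :: "(complex^'n::finite) set"
  assumes "vec.subspace W" shows "closed W"
proof (rule closed_subspace)
  show "subspace W"
    using assms unfolding subspace_def vec.subspace_def by (simp add: scaleR_eq_scale_of_real)
qed

lemma vec_subspace_orth_compl: "vec.subspace (orth_compl V)"
  by (rule vec.subspaceI) (auto simp: orth_compl_def cinner_add_right cinner_scale_right)

lemma orthonormal_set_finite:
  assumes "orthonormal_set (V::(complex^'n::finite) set)"
  shows "finite V" "card V \<le> DIM(complex^'n)"
proof -
  have "pairwise orthogonal V"
    using assms unfolding orthonormal_set_def pairwise_def orthogonal_def
    by (simp add: inner_eq_Re_cinner)
  moreover have "0 \<notin> V" using assms unfolding orthonormal_set_def by force
  ultimately show "finite V" "card V \<le> DIM(complex^'n)"
    using pairwise_orthogonal_independent independent_bound by blast+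
qed

lemma orthonormal_set_insert:
  assumes "orthonormal_set V" "x \<in> orth_compl V" "norm x = 1"
  shows "orthonormal_set (insert x V)" "x \<notin> V"
proof -
  have orth: "cinner v x = 0" "cinner x v = 0" if "v \<in> V" for v
    using assms(2) that cnj_cinner[of v x] unfolding orth_compl_def by auto
  have "cinner x x = 1" using assms(3) by (simp add: cinner_self)
  then show "x \<notin> V" using orth by fastforce
  with \<open>cinner x x = 1\<close> orth show "orthonormal_set (insert x V)"
    using assms(1) unfolding orthonormal_set_def by auto
qed

lemma orthonormal_expansion:
  assumes "orthonormal_set V" "orth_compl V \<subseteq> {0}"
  shows "x = (\<Sum>v\<in>V. cinner v x *s v)"
proof -
  have "cinner u (\<Sum>v\<in>V. cinner v x *s v) = cinner u x" if "u \<in> V" for u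
  proof -
    have "cinner u (\<Sum>v\<in>V. cinner v x *s v) = (\<Sum>v\<in>V. cinner v x * (if u = v then 1 else 0))"
      using assms(1) that unfolding orthonormal_set_def
      by (simp add: cinner_sum_right cinner_scale_right)
    also have "\<dots> = cinner u x"
      using orthonormal_set_finite(1)[OF assms(1)] that by (simp add: if_distrib cong: if_cong)
    finally show ?thesis .
  qed
  then have "x - (\<Sum>v\<in>V. cinner v x *s v) \<in> orth_compl V"
    unfolding orth_compl_def by (simp add: cinner_diff_right)
  then have "x - (\<Sum>v\<in>V. cinner v x *s v) = 0" using assms(2) by blast
  then show ?thesis by (simp only: right_minus_eq)
qed

lemma matrix_eq_on_orthonormal_basis:
  fixes A B :: "complex^'n::finite^'m"
  assumes "orthonormal_set V" "orth_compl V \<subseteq> {0}" "\<And>v. v \<in> V \<Longrightarrow> A *v v = B *v v"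
  shows "A = B"
proof -
  have expand: "M *v x = (\<Sum>v\<in>V. cinner v x *s (M *v v))" for M :: "complex^'n^'m" and x
    using arg_cong[where f = "(*v) M", OF orthonormal_expansion[OF assms(1,2), of x]]
    by (simp only: matrix_vector_mult_sum matrix_vector_mult_scale)
  have "A *v x = B *v x" for x
    unfolding expand[of A x] expand[of B x] using assms(3) by (intro sum.cong) auto
  then show ?thesis by (simp add: matrix_eq)
qed

lemma linear_coeff_zero_if_quadratic_nonneg:
  fixes c g :: real
  assumes "\<And>t. 0 \<le> 2*t*c + t\<^sup>2*g"
  shows "c = 0"
proof (rule ccontr)
  assume c: "c \<noteq> 0"
  have g: "0 \<le> g" using assms[of 1] assms[of "-1"] by simp
  define d where "d = g + 1"
  have d: "0 < d" using g d_def by simp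
  define t where "t = - c / d"
  have "d * (d * (2*t*c + t\<^sup>2*g)) = c\<^sup>2 * (g - 2*d)"
    unfolding t_def using d by (simp add: field_simps power2_eq_square)
  also have "\<dots> < 0" using c g d_def by (intro mult_pos_neg) auto
  finally show False using assms[of t] d by (simp add: mult_less_0_iff)
qed

text \<open>Perturbing x inside W shows that B x is orthogonal to W.\<close>

lemma hermitian_nonneg_form_zero_imp_kernel:
  fixes B :: "'n::finite cmat"
  assumes herm: "madj B = B" and W: "vec.subspace W"
    and nonneg: "\<And>y. y \<in> W \<Longrightarrow> 0 \<le> Re (cinner y (B *v y))"
    and x: "x \<in> W" "Re (cinner x (B *v x)) = 0" and Bx: "B *v x \<in> W"
  shows "B *v x = 0"
proof -
  have orth: "Re (cinner y (B *v x)) = 0" if y: "y \<in> W" for y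
  proof (rule linear_coeff_zero_if_quadratic_nonneg)
    fix t :: real
    have "cinner x (B *v y) = cnj (cinner y (B *v x))"
      using cinner_madj[of x B y] herm by (simp add: cnj_cinner)
    then have "Re (cinner x (B *v y)) = Re (cinner y (B *v x))" by simp
    then have "Re (cinner (x + t *\<^sub>R y) (B *v (x + t *\<^sub>R y)))
        = 2*t*Re (cinner y (B *v x)) + t\<^sup>2 * Re (cinner y (B *v y))"
      using x(2)
      by (simp add: matrix_vector_right_distrib matrix_vector_mult_scaleR cinner_add_left
          cinner_add_right cinner_scaleR_left cinner_scaleR_right power2_eq_square algebra_simps)
    moreover have "x + t *\<^sub>R y \<in> W"
      using W x y by (simp add: scaleR_eq_scale_of_real vec.subspace_add vec.subspace_scale)
    ultimately show "0 \<le> 2*t*Re (cinner y (B *v x)) + t\<^sup>2 * Re (cinner y (B *v y))"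
      using nonneg by metis
  qed
  have "Re (cinner (B *v x) (B *v x)) = 0" "Re (cinner (\<i> *s (B *v x)) (B *v x)) = 0"
    using orth Bx vec.subspace_scale[OF W Bx] by blast+
  then have "cinner (B *v x) (B *v x) = 0" by (simp add: cinner_scale_left complex_eq_iff)
  then show ?thesis by simp
qed

text \<open>A maximiser of the quadratic form on the unit sphere of an invariant subspace is an
  eigenvector.\<close>

lemma hermitian_eigenvector_in_invariant_subspace:
  fixes A :: "'n::finite cmat"
  assumes herm: "madj A = A" and W: "vec.subspace W" and inv: "\<And>x. x \<in> W \<Longrightarrow> A *v x \<in> W"
    and w: "w \<in> W" "w \<noteq> 0"
  obtains x and l :: real where "x \<in> W" "norm x = 1" "A *v x = l *\<^sub>R x"
proof -
  have unit: "(1 / norm y) *\<^sub>R y \<in> W \<inter> sphere 0 1" if "y \<in> W" "y \<noteq> 0" for y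
  proof -
    have "(1 / norm y) *\<^sub>R y \<in> W"
      using that W by (simp only: scaleR_eq_scale_of_real vec.subspace_scale)
    then show ?thesis using that by simp
  qed
  have "compact (W \<inter> sphere 0 1)"
    by (intro closed_Int_compact vec_subspace_imp_closed[OF W] compact_sphere)
  then obtain x where x: "x \<in> W \<inter> sphere 0 1"
    and max: "\<And>y. y \<in> W \<inter> sphere 0 1 \<Longrightarrow> Re (cinner y (A *v y)) \<le> Re (cinner x (A *v x))"
    using continuous_attains_sup[of "W \<inter> sphere 0 1" "\<lambda>x. Re (cinner x (A *v x))"]
      continuous_on_Re_quadratic_form unit[OF w] by blast
  define l where "l = Re (cinner x (A *v x))"
  define B where "B = cmscale (of_real l) (mat 1) - A"
  have Bv: "B *v y = of_real l *s y - A *v y" for y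
    unfolding B_def by (simp add: matrix_vector_mult_diff_rdistrib cmscale_matrix_vector_mult)
  have form_B: "Re (cinner y (B *v y)) = l * (norm y)\<^sup>2 - Re (cinner y (A *v y))" for y
    by (simp add: Bv cinner_diff_right cinner_scale_right cinner_self)
  have "0 \<le> Re (cinner y (B *v y))" if y: "y \<in> W" for y
  proof (cases "y = 0")
    case False
    have "Re (cinner ((1 / norm y) *\<^sub>R y) (A *v ((1 / norm y) *\<^sub>R y))) \<le> l"
      using max[OF unit[OF y False]] unfolding l_def .
    then show ?thesis
      using False
      by (simp add: form_B matrix_vector_mult_scaleR cinner_scaleR_left cinner_scaleR_right
          power2_eq_square field_simps)
  qed simp
  moreover have "Re (cinner x (B *v x)) = 0" using x by (simp add: form_B l_def)
  moreover have "B *v x \<in> W"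
    using W x inv[of x] by (simp add: Bv vec.subspace_diff vec.subspace_scale)
  ultimately have "B *v x = 0"
    using hermitian_nonneg_form_zero_imp_kernel[OF _ W] x herm
    by (simp add: B_def madj_diff madj_cmscale)
  then have "A *v x = l *\<^sub>R x" by (simp add: Bv scaleR_eq_scale_of_real)
  then show thesis using that[of x l] x by simp
qed

lemma hermitian_orth_compl_invariant:
  assumes herm: "madj A = A" and eig: "real_eigenvectors A V" and x: "x \<in> orth_compl V"
  shows "A *v x \<in> orth_compl V"
  unfolding orth_compl_def mem_Collect_eq
proof
  fix v assume v: "v \<in> V"
  obtain l where l: "A *v v = l *\<^sub>R v" using eig v unfolding real_eigenvectors_def by blast
  have "cinner v (A *v x) = cinner (A *v v) x" using cinner_madj[of v A x] herm by simp
  then show "cinner v (A *v x) = 0"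
    using x v unfolding l orth_compl_def by (simp add: cinner_scaleR_left)
qed

text \<open>Grow an orthonormal set of eigenvectors inside its orthogonal complement; the dimension
  bound stops the growth only at a complete set.\<close>

lemma hermitian_orthonormal_eigenbasis:
  fixes A :: "'n::finite cmat"
  assumes herm: "madj A = A"
  obtains V where "orthonormal_set V" "real_eigenvectors A V" "orth_compl V \<subseteq> {0}"
proof -
  have "\<exists>V. orthonormal_set V \<and> real_eigenvectors A V \<and> (orth_compl V \<subseteq> {0} \<or> card V = n)" for n
  proof (induction n)
    case 0
    show ?case
      by (rule exI[of _ "{}"]) (auto simp: orthonormal_set_def real_eigenvectors_def)
  next
    case (Suc n)
    then obtain V where V: "orthonormal_set V" "real_eigenvectors A V"
      and "orth_compl V \<subseteq> {0} \<or> card V = n" by blast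
    then consider "orth_compl V \<subseteq> {0}" | w where "card V = n" "w \<in> orth_compl V" "w \<noteq> 0"
      by blast
    then show ?case
    proof cases
      case 1
      then show ?thesis using V by blast
    next
      case (2 w)
      obtain x l where x: "x \<in> orth_compl V" "norm x = 1" "A *v x = l *\<^sub>R x"
        using hermitian_eigenvector_in_invariant_subspace[OF herm vec_subspace_orth_compl
            hermitian_orth_compl_invariant[OF herm V(2)] 2(2,3)] .
      have "card (insert x V) = Suc n"
        using orthonormal_set_insert[OF V(1) x(1,2)] orthonormal_set_finite(1)[OF V(1)] 2(1) by simp
      moreover have "real_eigenvectors A (insert x V)"
        using V(2) x(3) unfolding real_eigenvectors_def by blast
      ultimately show ?thesis using orthonormal_set_insert[OF V(1) x(1,2)] by blast
    qed
  qed
  then obtain V where "orthonormal_set V" "real_eigenvectors A V"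
    "orth_compl V \<subseteq> {0} \<or> card V = Suc DIM(complex^'n)" by blast
  then show thesis using that orthonormal_set_finite(2)[of V] by fastforce
qed

definition spectral_sum :: "(complex^'n::finite) set \<Rightarrow> (complex^'n \<Rightarrow> complex) \<Rightarrow> 'n cmat" where
  "spectral_sum V c = (\<chi> i j. \<Sum>v\<in>V. c v * v $ i * cnj (v $ j))"

lemma spectral_sum_mult_vec: "spectral_sum V c *v x = (\<Sum>v\<in>V. (c v * cinner v x) *s v)"
proof -
  have "(spectral_sum V c *v x) $ i = (\<Sum>v\<in>V. \<Sum>j\<in>UNIV. c v * v $ i * cnj (v $ j) * x $ j)" for i
    unfolding spectral_sum_def matrix_vector_mult_def
    by (simp add: sum_distrib_right) (rule sum.swap)
  then show ?thesis
    by (simp add: vec_eq_iff sum_component cinner_def sum_distrib_left sum_distrib_right mult_ac)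
qed

lemma spectral_sum_on_basis:
  assumes "orthonormal_set V" "w \<in> V"
  shows "spectral_sum V c *v w = c w *s w"
proof -
  have "spectral_sum V c *v w = (\<Sum>v\<in>V. if v = w then c v *s v else 0)"
    unfolding spectral_sum_mult_vec using assms unfolding orthonormal_set_def
    by (intro sum.cong) auto
  then show ?thesis using orthonormal_set_finite(1)[OF assms(1)] assms(2) by simp
qed

lemma spectral_sum_quadratic_form:
  "cinner x (spectral_sum V c *v x) = (\<Sum>v\<in>V. c v * of_real ((norm (cinner v x))\<^sup>2))"
proof -
  have "cinner v x * cinner x v = of_real ((norm (cinner v x))\<^sup>2)" for v
    using cnj_mult_self[of "cinner v x"] cnj_cinner[of v x] by (simp add: mult.commute)
  then show ?thesis
    by (simp add: spectral_sum_mult_vec cinner_sum_right cinner_scale_right mult.assoc)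
qed

text \<open>The vector u = C v - \<surd>\<lambda> v satisfies C u = -\<surd>\<lambda> u, which positivity of C
  permits only for u = 0.\<close>

lemma psd_square_root_on_eigenvector:
  fixes C :: "'n::finite cmat"
  assumes psd: "psd C" and CC: "C *v (C *v v) = of_real lam *s v" and lam: "0 \<le> lam"
  shows "C *v v = of_real (sqrt lam) *s v"
proof -
  define s where "s = sqrt lam"
  define u where "u = C *v v - of_real s *s v"
  have ss: "of_real s * of_real s = (of_real lam :: complex)"
    unfolding s_def using lam by (simp flip: of_real_mult)
  have Cu: "C *v u = - (of_real s *s u)"
    unfolding u_def using CC ss
    by (simp add: matrix_vector_mult_diff_distrib matrix_vector_mult_scale vec_eq_iff algebra_simps)
  have "0 \<le> cinner u (C *v u)" using psd unfolding psd_def by blast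
  then have "s * (norm u)\<^sup>2 \<le> 0"
    unfolding Cu by (simp add: cinner_minus_right cinner_scale_right cinner_self complex_nonneg_iff)
  moreover have "0 \<le> s * (norm u)\<^sup>2" using lam unfolding s_def by simp
  ultimately have "s = 0 \<or> u = 0" by simp
  then have "u = 0"
  proof
    assume s0: "s = 0"
    then have "cinner u u = cinner (C *v v) u" unfolding u_def by simp
    also have "\<dots> = cinner v (C *v u)" using cinner_madj[of v C u] psd_madj[OF psd] by simp
    also have "\<dots> = 0" using Cu s0 by simp
    finally show "u = 0" by simp
  qed
  then show ?thesis unfolding u_def s_def by simp
qed

lemma psd_square_root_ex1:
  fixes A :: "'n::finite cmat"
  assumes psdA: "psd A"
  shows "\<exists>!B. psd B \<and> B ** B = A"
proof -
  obtain V where V: "orthonormal_set V" "real_eigenvectors A V" "orth_compl V \<subseteq> {0}"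
    using hermitian_orthonormal_eigenbasis[OF psd_madj[OF psdA]] .
  define lam where "lam v = (SOME l. A *v v = l *\<^sub>R v)" for v
  have lam: "A *v v = of_real (lam v) *s v" if "v \<in> V" for v
    using V(2) that someI_ex[of "\<lambda>l. A *v v = l *\<^sub>R v"]
    unfolding real_eigenvectors_def lam_def by (metis scaleR_eq_scale_of_real)
  have lam_nonneg: "0 \<le> lam v" if v: "v \<in> V" for v
  proof -
    have "cinner v (A *v v) = of_real (lam v)"
      using V(1) v unfolding orthonormal_set_def by (simp add: lam cinner_scale_right)
    then show ?thesis using psdA unfolding psd_def by (metis Re_complex_of_real complex_nonneg_iff)
  qed
  define B where "B = spectral_sum V (\<lambda>v. of_real (sqrt (lam v)))"
  have B_on: "B *v v = of_real (sqrt (lam v)) *s v" if "v \<in> V" for v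
    unfolding B_def using spectral_sum_on_basis[OF V(1) that] .
  have root_unique: "C = B" if C: "psd C" "C ** C = A" for C
  proof (rule matrix_eq_on_orthonormal_basis[OF V(1,3)])
    fix v assume v: "v \<in> V"
    have "C *v (C *v v) = of_real (lam v) *s v"
      using C(2) lam[OF v] by (simp add: matrix_vector_mul_assoc)
    then show "C *v v = B *v v"
      using psd_square_root_on_eigenvector[OF C(1) _ lam_nonneg[OF v]] B_on[OF v] by simp
  qed
  have "psd B"
    unfolding psd_def B_def spectral_sum_quadratic_form
    by (intro allI sum_nonneg) (simp add: complex_nonneg_iff lam_nonneg)
  moreover have "B ** B = A"
  proof (rule matrix_eq_on_orthonormal_basis[OF V(1,3)])
    fix v assume v: "v \<in> V"
    have "of_real (sqrt (lam v)) * of_real (sqrt (lam v)) = (of_real (lam v) :: complex)"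
      using lam_nonneg[OF v] by (simp flip: of_real_mult)
    then show "(B ** B) *v v = A *v v"
      by (simp add: B_on[OF v] lam[OF v] matrix_vector_mul_assoc[symmetric]
          matrix_vector_mult_scale vec_eq_iff mult.assoc)
  qed
  ultimately show ?thesis using root_unique by blast
qed

lemma
  assumes "psd A"
  shows psd_msqrt: "psd (msqrt A)" and msqrt_mult_self: "msqrt A ** msqrt A = A"
  using theI'[OF psd_square_root_ex1[OF assms]] unfolding msqrt_def by auto

lemma
  assumes "psd A" "invertible A"
  shows madj_minvsqrt: "madj (minvsqrt A) = minvsqrt A"
    and invertible_minvsqrt: "invertible (minvsqrt A)"
proof -
  have "invertible (msqrt A)"
    using invertible_mult_factors(1)[of "msqrt A" "msqrt A"] msqrt_mult_self[OF assms(1)] assms(2)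
    by simp
  then show "madj (minvsqrt A) = minvsqrt A" "invertible (minvsqrt A)"
    unfolding minvsqrt_def
    by (simp_all add: madj_matrix_inv psd_madj[OF psd_msqrt[OF assms(1)]] invertible_matrix_inv)
qed

lemma trace_mult_psd_nonneg:
  fixes Y D :: "'n::finite cmat"
  assumes "psd Y" "psd D"
  shows "0 \<le> trace (Y ** D)"
proof -
  define B where "B = msqrt Y"
  have B: "madj B = B" "B ** B = Y"
    using psd_madj[OF psd_msqrt] msqrt_mult_self assms(1) unfolding B_def by auto
  have diag: "(B ** D ** B) $ i $ i = cinner (B *v axis i 1) (D *v (B *v axis i 1))" for i
  proof -
    have "((B ** D ** B) *v axis i 1) $ i = (\<Sum>j\<in>UNIV. if j = i then (B ** D ** B) $ i $ j else 0)"
      unfolding matrix_vector_mult_def axis_def vec_lambda_beta by (rule sum.cong) auto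
    then have "(B ** D ** B) $ i $ i = cinner (axis i 1) ((B ** D ** B) *v axis i 1)"
      by (simp add: cinner_axis)
    also have "\<dots> = cinner (axis i 1) (B *v (D *v (B *v axis i 1)))"
      by (simp add: matrix_vector_mul_assoc matrix_mul_assoc)
    also have "\<dots> = cinner (B *v axis i 1) (D *v (B *v axis i 1))"
      using cinner_madj[of "axis i 1" B] B(1) by simp
    finally show ?thesis .
  qed
  have "trace (Y ** D) = trace (B ** D ** B)"
    using trace_mul_sym[of B "B ** D"] B(2) by (simp add: matrix_mul_assoc)
  also have "\<dots> = (\<Sum>i\<in>UNIV. cinner (B *v axis i 1) (D *v (B *v axis i 1)))"
    unfolding trace_def diag ..
  also have "0 \<le> \<dots>" using assms(2) unfolding psd_def by (intro sum_nonneg) blast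
  finally show ?thesis by simp
qed

section \<open>Transporting relative modular operators\<close>

definition schwarz_map :: "('b::finite cmat \<Rightarrow> 'a::finite cmat) \<Rightarrow> bool" where
  "schwarz_map \<Psi> \<longleftrightarrow> (\<forall>\<rho> \<sigma>. pd \<sigma> \<longrightarrow> invertible (\<Psi> \<sigma>) \<longrightarrow>
     loewner_le (\<Psi> (madj \<rho>) ** matrix_inv (\<Psi> \<sigma>) ** \<Psi> \<rho>) (\<Psi> (madj \<rho> ** matrix_inv \<sigma> ** \<rho>)))"

text \<open>The factors S on either side of \<open>\<tau>\<close> cancel against those in V.\<close>

lemma hs_rel_modular_pullback:
  fixes \<Phi> :: "'a::finite cmat \<Rightarrow> 'b::finite cmat"
  assumes lin: "clinear_map \<Phi>" and pos: "positive_map \<Phi>"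
    and P: "madj P = P" and S: "madj S = S" "invertible S"
    and G: "invertible (hs_adjoint \<Phi> \<sigma>)"
  defines "V \<equiv> \<lambda>\<rho>. hs_adjoint \<Phi> (\<rho> ** P) ** S"
  shows "hs Z (hs_adjoint V (rel_modular Y (S ** hs_adjoint \<Phi> \<sigma> ** S) (V Z)))
    = trace (Y ** (hs_adjoint \<Phi> (Z ** P) ** matrix_inv (hs_adjoint \<Phi> \<sigma>) ** hs_adjoint \<Phi> (P ** madj Z)))"
proof -
  let ?\<Psi> = "hs_adjoint \<Phi>"
  have linV: "clinear_map V"
    using clinear_map_hs_adjoint[OF lin]
    unfolding clinear_map_def V_def
    by (simp add: matrix_mult_add_right cmscale_matrix_mult)
  have "madj (V Z) = S ** ?\<Psi> (P ** madj Z)"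
    unfolding V_def by (simp add: madj_mult S P hs_adjoint_madj[OF lin pos, symmetric])
  then have "V Z ** matrix_inv (S ** ?\<Psi> \<sigma> ** S) ** madj (V Z)
      = ?\<Psi> (Z ** P) ** (S ** matrix_inv (S ** ?\<Psi> \<sigma> ** S) ** S) ** ?\<Psi> (P ** madj Z)"
    unfolding V_def by (simp add: matrix_mul_assoc)
  also have "\<dots> = ?\<Psi> (Z ** P) ** matrix_inv (?\<Psi> \<sigma>) ** ?\<Psi> (P ** madj Z)"
    by (simp add: matrix_inv_sandwich[OF S(2) G])
  finally show ?thesis
    using hs_hs_adjoint_comp[OF linV] by (simp add: hs_rel_modular_self)
qed

lemma op_le_rel_modular_pullback:
  fixes \<Phi> :: "'a::finite cmat \<Rightarrow> 'b::finite cmat"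
  assumes lin: "clinear_map \<Phi>" and pos: "positive_map \<Phi>"
    and schwarz: "schwarz_map (hs_adjoint \<Phi>)"
    and P: "madj P = P" "invertible P" and S: "madj S = S"
    and \<omega>: "pd \<omega>" and \<tau>: "invertible (S ** hs_adjoint \<Phi> (P ** \<omega> ** P) ** S)"
    and Y: "psd Y"
  shows "op_le (hs_adjoint (\<lambda>\<rho>. hs_adjoint \<Phi> (\<rho> ** P) ** S)
      \<circ> rel_modular Y (S ** hs_adjoint \<Phi> (P ** \<omega> ** P) ** S) \<circ> (\<lambda>\<rho>. hs_adjoint \<Phi> (\<rho> ** P) ** S))
    (rel_modular (\<Phi> Y) \<omega>)"
  unfolding op_le_def
proof
  fix Z :: "'b cmat"
  let ?\<Psi> = "hs_adjoint \<Phi>" and ?\<sigma> = "P ** \<omega> ** P"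
  have S_G: "invertible S" "invertible (?\<Psi> ?\<sigma>)"
    using invertible_mult_factors[of "S ** ?\<Psi> ?\<sigma>" S] invertible_mult_factors[of S "?\<Psi> ?\<sigma>"] \<tau>
    by auto
  have "Z ** P ** matrix_inv ?\<sigma> ** (P ** madj Z) = Z ** (P ** matrix_inv ?\<sigma> ** P) ** madj Z"
    by (simp add: matrix_mul_assoc)
  also have "\<dots> = Z ** matrix_inv \<omega> ** madj Z"
    by (simp add: matrix_inv_sandwich[OF P(2) pd_imp_invertible[OF \<omega>]])
  finally have "loewner_le (?\<Psi> (Z ** P) ** matrix_inv (?\<Psi> ?\<sigma>) ** ?\<Psi> (P ** madj Z))
      (?\<Psi> (Z ** matrix_inv \<omega> ** madj Z))"
    using schwarz[unfolded schwarz_map_def, rule_format, OF pd_sandwich[OF \<omega> P] S_G(2),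
        of "P ** madj Z"]
    by (simp add: madj_mult P)
  then have "0 \<le> trace (Y ** (?\<Psi> (Z ** matrix_inv \<omega> ** madj Z)
      - ?\<Psi> (Z ** P) ** matrix_inv (?\<Psi> ?\<sigma>) ** ?\<Psi> (P ** madj Z)))"
    unfolding loewner_le_def by (rule trace_mult_psd_nonneg[OF Y])
  then show "0 \<le> hs Z (rel_modular (\<Phi> Y) \<omega> Z - (hs_adjoint (\<lambda>\<rho>. ?\<Psi> (\<rho> ** P) ** S)
      \<circ> rel_modular Y (S ** ?\<Psi> ?\<sigma> ** S) \<circ> (\<lambda>\<rho>. ?\<Psi> (\<rho> ** P) ** S)) Z)"
    by (simp add: hs_diff_right hs_rel_modular_self trace_mult_hs_adjoint[OF lin pos]
        hs_rel_modular_pullback[OF lin pos P(1) S S_G] matrix_mult_diff_left trace_sub)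
qed

theorem mainTheorem1:
  fixes \<Phi> :: "('a::finite) cmat \<Rightarrow> ('b::finite) cmat"
    and X Y :: "'a cmat" and \<omega> :: "'b cmat"
  assumes lin: "clinear_map \<Phi>"
    and pos: "positive_map \<Phi>"
    and tp: "trace_preserving \<Phi>"
    and schwarz: "\<And>\<rho> \<sigma>. pd \<sigma> \<Longrightarrow> invertible (hs_adjoint \<Phi> \<sigma>) \<Longrightarrow>
        loewner_le (hs_adjoint \<Phi> (madj \<rho>) ** matrix_inv (hs_adjoint \<Phi> \<sigma>) ** hs_adjoint \<Phi> \<rho>)
                   (hs_adjoint \<Phi> (madj \<rho> ** matrix_inv \<sigma> ** \<rho>))"
    and X: "pd X" and XPhi: "invertible (\<Phi> X)"
    and om: "pd \<omega>"
    and tau_inv: "invertible (msqrt X ** hs_adjoint \<Phi> (minvsqrt (\<Phi> X) ** \<omega> ** minvsqrt (\<Phi> X)) ** msqrt X)"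
    and Y: "psd Y"
  shows "let \<tau> = msqrt X ** hs_adjoint \<Phi> (minvsqrt (\<Phi> X) ** \<omega> ** minvsqrt (\<Phi> X)) ** msqrt X;
             V = (\<lambda>\<rho>. hs_adjoint \<Phi> (\<rho> ** minvsqrt (\<Phi> X)) ** msqrt X)
         in op_le (hs_adjoint V \<circ> rel_modular Y \<tau> \<circ> V) (rel_modular (\<Phi> Y) \<omega>)"
proof -
  have "psd (\<Phi> X)" using pos pd_imp_psd[OF X] unfolding positive_map_def by blast
  moreover have "schwarz_map (hs_adjoint \<Phi>)" using schwarz unfolding schwarz_map_def by blast
  moreover have "madj (msqrt X) = msqrt X" by (rule psd_madj[OF psd_msqrt[OF pd_imp_psd[OF X]]])
  ultimately show ?thesis
    unfolding Let_def
    using op_le_rel_modular_pullback[OF lin pos _ madj_minvsqrt invertible_minvsqrt _ om tau_inv Y]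
      XPhi by blast
qed

end
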